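(* Let $p=2$, $\rho\ge 0$, $\mathbb{P}_\circ\in\mathscr{Q}_2$ with covariance $\Sigma_\circ\in\mathbb{S}_+^d$, and $s\equiv 0$. Then the set of global minimizers over $\mathcal{O}^{d,r}$ of $X\mapsto\varphi(X)$ coincides with the set of global minimizers over $\mathcal{O}^{d,r}$ of $X\mapsto\mathrm{tr}((I_d-XX^\top)\Sigma_\circ)$.
   Context: Let $d,r$ be integers with $1\le r<d$ and $\mathcal{O}^{d,r}=\{X\in\mathbb{R}^{d\times r}: X^\top X=I_r\}$. $\mathscr{Q}_2$ is the set of Borel probability distributions on $\mathbb{R}^d$ with finite second moment, and $\mathbb{W}_2$ is the type-2 Wasserstein distance $\mathbb{W}_2(\mathbb{P}_1,\mathbb{P}_2)=\inf_{\mathbb{Q}}\big(\mathbb{E}_{\mathbb{Q}}\|\xi_1-\xi_2\|_2^2\big)^{1/2}$ over couplings $\mathbb{Q}$ of $\mathbb{P}_1,\mathbb{P}_2$. For $X\in\mathcal{O}^{d,r}$, $\varphi(X)=\sup\{\mathbb{E}_{\mathbb{P}}\big[\|(I_d-XX^\top)(\xi-\mathbb{E}_{\mathbb{P}}[\xi])\|_2^2\big]:\mathbb{P}\in\mathscr{Q}_2,\ \mathbb{W}_2(\mathbb{P},\mathbb{P}_\circ)\le\rho\}$ (the inner problem of the Wasserstein distributionally robust PCA model). $\Sigma_\circ$ is the covariance matrix of $\xi$ under $\mathbb{P}_\circ$. *)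

theory Defs
  imports "HOL-Probability.Probability"
begin

definition stiefel :: "(real^'r^'d) set" where
  "stiefel = {X. transpose X ** X = mat 1}"

definition Q2 :: "(real^'d) measure set" where
  "Q2 = {P. prob_space P \<and> sets P = sets borel \<and> integrable P (\<lambda>x. (norm x)\<^sup>2)}"

definition couplings :: "(real^'d) measure \<Rightarrow> (real^'d) measure \<Rightarrow> ((real^'d) \<times> (real^'d)) measure set" where
  "couplings P1 P2 = {Q. prob_space Q \<and> sets Q = sets borel \<and>
       distr Q borel fst = P1 \<and> distr Q borel snd = P2}"

definition W2 :: "(real^'d) measure \<Rightarrow> (real^'d) measure \<Rightarrow> real" where
  "W2 P1 P2 = sqrt (Inf {(\<integral>z. (norm (fst z - snd z))\<^sup>2 \<partial>Q) | Q. Q \<in> couplings P1 P2})"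

definition mean :: "(real^'d) measure \<Rightarrow> real^'d" where
  "mean P = (\<integral>x. x \<partial>P)"

definition covariance :: "(real^'d) measure \<Rightarrow> real^'d^'d" where
  "covariance P = (\<chi> i j. \<integral>x. (x$i - mean P $ i) * (x$j - mean P $ j) \<partial>P)"

text \<open>Inner problem of the Wasserstein DR-PCA model (p = 2, s = 0).\<close>
definition phi :: "real \<Rightarrow> (real^'d) measure \<Rightarrow> real^'r^'d \<Rightarrow> real" where
  "phi \<rho> P0 X = Sup {(\<integral>\<xi>. (norm ((mat 1 - X ** transpose X) *v (\<xi> - mean P)))\<^sup>2 \<partial>P) | P.
                        P \<in> Q2 \<and> W2 P P0 \<le> \<rho>}"

end

theory Submission
  imports Defs
begin

text \<open>For X on the Stiefel manifold, M = I - X X^T is an orthogonal projection and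
  tr(M \<Sigma>_P) is the residual variance V(P) = E_P |M(\<xi> - mean P)|^2.
  If W2(P, P0) \<le> \<rho>, then V(P) \<le> E_P |M(\<xi> - mean P0)|^2, and along a nearly optimal
  coupling Minkowski's inequality in L^2 bounds the latter by (sqrt V(P0) + \<rho>)^2.
  The bound is attained: by the transport x \<mapsto> x + (\<rho> / sqrt V(P0)) M(x - mean P0) if
  V(P0) > 0, and otherwise by adding \<plusminus>\<rho> u with a fair random sign, for a unit vector u in
  the range of M (nonzero because r < d). Hence \<phi>(X) = (sqrt tr(M \<Sigma>_0) + \<rho>)^2 is an
  increasing function of tr(M \<Sigma>_0), so both problems have the same minimizers.\<close>

definition compl_proj :: "real^'r^'d \<Rightarrow> real^'d^'d" where
  "compl_proj X = mat 1 - X ** transpose X"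

lemma inner_matrix_vector_mult: "((A::real^'n^'m) *v x) \<bullet> y = x \<bullet> (transpose A *v y)"
  by (metis dot_lmul_matrix vector_transpose_matrix)

lemma compl_proj_apply: "compl_proj X *v v = v - X *v (transpose X *v v)"
  by (simp add: compl_proj_def matrix_vector_mult_diff_rdistrib matrix_vector_mul_assoc
      del: transpose_matrix_vector)

lemma inner_compl_proj:
  "(compl_proj X *v u) \<bullet> v = u \<bullet> v - (transpose X *v u) \<bullet> (transpose X *v v)"
  by (simp add: compl_proj_apply inner_diff_left inner_matrix_vector_mult del: transpose_matrix_vector)

lemma transpose_mult_compl_proj:
  assumes "X \<in> stiefel" shows "transpose X *v (compl_proj X *v v) = 0"
proof -
  have "transpose X *v (compl_proj X *v v)
        = transpose X *v v - (transpose X ** X) *v (transpose X *v v)"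
    by (simp add: compl_proj_apply matrix_vector_mult_diff_distrib matrix_vector_mul_assoc
        matrix_mul_assoc del: transpose_matrix_vector)
  then show ?thesis using assms by (simp add: stiefel_def del: transpose_matrix_vector)
qed

lemma compl_proj_idem:
  assumes "X \<in> stiefel" shows "compl_proj X *v (compl_proj X *v v) = compl_proj X *v v"
  using compl_proj_apply[of X "compl_proj X *v v"] transpose_mult_compl_proj[OF assms] by simp

lemma norm_compl_proj_square:
  assumes "X \<in> stiefel" shows "(norm (compl_proj X *v v))\<^sup>2 = (compl_proj X *v v) \<bullet> v"
  using inner_compl_proj[of X v "compl_proj X *v v"] transpose_mult_compl_proj[OF assms, of v]
  by (simp add: power2_norm_eq_inner inner_commute del: transpose_matrix_vector)

lemma norm_compl_proj_le:
  assumes "X \<in> stiefel" shows "norm (compl_proj X *v v) \<le> norm v"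
proof -
  have "(norm (compl_proj X *v v))\<^sup>2 \<le> norm (compl_proj X *v v) * norm v"
    unfolding norm_compl_proj_square[OF assms] by (rule norm_cauchy_schwarz)
  then show ?thesis by (cases "compl_proj X *v v = 0") (auto simp: power2_eq_square)
qed

lemma trace_compl_proj:
  assumes "X \<in> stiefel" shows "trace (compl_proj (X::real^'r^'d)) = real CARD('d) - real CARD('r)"
  using assms by (simp add: stiefel_def compl_proj_def trace_sub trace_I trace_mul_sym[of X])

lemma matrix_vector_mult_axis_nth: "((A::real^'n^'m) *v axis j 1) $ i = A $ i $ j"
  by (simp add: matrix_vector_mult_def axis_def if_distrib cong: if_cong)

lemma compl_proj_fixes_unit_vector:
  assumes "X \<in> stiefel" "CARD('r) < CARD('d)"
  shows "\<exists>u. norm u = 1 \<and> compl_proj (X::real^'r^'d) *v u = u"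
proof -
  let ?M = "compl_proj X"
  have "\<exists>j. ?M *v axis j 1 \<noteq> 0"
  proof (rule ccontr)
    assume "\<not> ?thesis"
    then have "?M $ j $ j = 0" for j by (metis matrix_vector_mult_axis_nth zero_index)
    then have "trace ?M = 0" by (simp add: trace_def)
    then show False using trace_compl_proj[OF assms(1)] assms(2) by simp
  qed
  then obtain w where "w \<noteq> 0" "?M *v w = w" using compl_proj_idem[OF assms(1)] by metis
  then show ?thesis
    by (intro exI[of _ "(1 / norm w) *\<^sub>R w"]) (simp add: matrix_vector_mult_scaleR)
qed

lemma le_of_le_add_mult:
  fixes x C D :: real
  assumes "D \<ge> 0" and "\<And>t. t > 0 \<Longrightarrow> x \<le> C + t * D"
  shows "x \<le> C"
proof (rule field_le_epsilon)
  fix e :: real assume "e > 0"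
  have "e / (D + 1) > 0" using \<open>e > 0\<close> \<open>D \<ge> 0\<close> by simp
  then have "x \<le> C + e / (D + 1) * D" using assms(2) by blast
  also have "\<dots> \<le> C + e" using \<open>e > 0\<close> \<open>D \<ge> 0\<close> by (simp add: field_simps)
  finally show "x \<le> C + e" .
qed

lemma le_sqrt_add_sqrt_square:
  fixes x A B :: real
  assumes "A \<ge> 0" "B \<ge> 0" and weighted: "\<And>l. l > 0 \<Longrightarrow> x \<le> (1 + l) * A + (1 + 1 / l) * B"
  shows "x \<le> (sqrt A + sqrt B)\<^sup>2"
proof -
  consider "A > 0" "B > 0" | "A = 0" | "B = 0" using assms by linarith
  then show ?thesis
  proof cases
    case 1
    have "x \<le> (1 + sqrt B / sqrt A) * A + (1 + sqrt A / sqrt B) * B"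
      using weighted[of "sqrt B / sqrt A"] 1 by simp
    also have "\<dots> = (sqrt A + sqrt B)\<^sup>2"
      using 1 by (simp add: field_simps power2_eq_square real_sqrt_mult[symmetric])
    finally show ?thesis .
  next
    case 2
    have "x \<le> B" using \<open>B \<ge> 0\<close>
      by (rule le_of_le_add_mult) (use weighted[of "1 / t" for t] 2 in \<open>auto simp: algebra_simps\<close>)
    then show ?thesis using 2 \<open>B \<ge> 0\<close> by simp
  next
    case 3
    have "x \<le> A" using \<open>A \<ge> 0\<close>
      by (rule le_of_le_add_mult) (use weighted 3 in \<open>auto simp: algebra_simps\<close>)
    then show ?thesis using 3 \<open>A \<ge> 0\<close> by simp
  qed
qed

lemma norm_add_square_le_weighted:
  fixes x y :: "'a::real_normed_vector"
  assumes "l > 0"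
  shows "(norm (x + y))\<^sup>2 \<le> (1 + l) * (norm x)\<^sup>2 + (1 + 1 / l) * (norm y)\<^sup>2"
proof -
  have "(norm (x + y))\<^sup>2 \<le> (norm x + norm y)\<^sup>2"
    by (intro power_mono norm_triangle_ineq) auto
  moreover have "2 * norm x * norm y \<le> l * (norm x)\<^sup>2 + (norm y)\<^sup>2 / l"
  proof -
    have "0 \<le> (l * norm x - norm y)\<^sup>2" by simp
    then have "(2 * norm x * norm y) * l \<le> (l * (norm x)\<^sup>2 + (norm y)\<^sup>2 / l) * l"
      using assms by (simp add: power2_diff algebra_simps power2_eq_square)
    then show ?thesis using assms by simp
  qed
  ultimately show ?thesis by (simp add: power2_sum algebra_simps)
qed

lemma integrable_square_norm_bound:
  fixes h :: "'a \<Rightarrow> 'b::{banach,second_countable_topology}"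
    and F :: "'a \<Rightarrow> 'c::{banach,second_countable_topology}"
  assumes "prob_space \<Omega>" "integrable \<Omega> (\<lambda>\<omega>. (norm (h \<omega>))\<^sup>2)"
    and [measurable]: "F \<in> borel_measurable \<Omega>"
    and bound: "\<And>\<omega>. \<omega> \<in> space \<Omega> \<Longrightarrow> norm (F \<omega>) \<le> a * norm (h \<omega>) + b" and "a \<ge> 0"
  shows "integrable \<Omega> (\<lambda>\<omega>. (norm (F \<omega>))\<^sup>2)"
proof (rule Bochner_Integration.integrable_bound[where f="\<lambda>\<omega>. 2 * a\<^sup>2 * (norm (h \<omega>))\<^sup>2 + 2 * b\<^sup>2"])
  interpret prob_space \<Omega> by fact
  show "integrable \<Omega> (\<lambda>\<omega>. 2 * a\<^sup>2 * (norm (h \<omega>))\<^sup>2 + 2 * b\<^sup>2)"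
    using assms(2) by auto
  show "AE \<omega> in \<Omega>. norm ((norm (F \<omega>))\<^sup>2) \<le> norm (2 * a\<^sup>2 * (norm (h \<omega>))\<^sup>2 + 2 * b\<^sup>2)"
  proof (rule AE_I2)
    fix \<omega> assume "\<omega> \<in> space \<Omega>"
    let ?n = "norm (h \<omega>)"
    have "(norm (F \<omega>))\<^sup>2 \<le> (a * ?n + b)\<^sup>2"
      using bound[OF \<open>\<omega> \<in> space \<Omega>\<close>] by (intro power_mono) auto
    also have "\<dots> \<le> 2 * a\<^sup>2 * ?n\<^sup>2 + 2 * b\<^sup>2"
      using zero_le_power2[of "a * ?n - b"] by (simp add: power2_sum power2_diff power_mult_distrib)
    finally show "norm ((norm (F \<omega>))\<^sup>2) \<le> norm (2 * a\<^sup>2 * ?n\<^sup>2 + 2 * b\<^sup>2)" by simp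
  qed
qed simp

lemma integrable_of_square_integrable:
  fixes h :: "'a \<Rightarrow> 'b::{banach,second_countable_topology}"
  assumes "prob_space \<Omega>" "integrable \<Omega> (\<lambda>\<omega>. (norm (h \<omega>))\<^sup>2)"
    and "h \<in> borel_measurable \<Omega>"
  shows "integrable \<Omega> h"
proof (rule Bochner_Integration.integrable_bound[where f="\<lambda>\<omega>. 1 + (norm (h \<omega>))\<^sup>2"])
  interpret prob_space \<Omega> by fact
  show "integrable \<Omega> (\<lambda>\<omega>. 1 + (norm (h \<omega>))\<^sup>2)" using assms(2) by auto
  show "AE \<omega> in \<Omega>. norm (h \<omega>) \<le> norm (1 + (norm (h \<omega>))\<^sup>2)"
  proof (rule AE_I2)
    fix \<omega>
    have "2 * norm (h \<omega>) \<le> (norm (h \<omega>))\<^sup>2 + 1"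
      using zero_le_power2[of "norm (h \<omega>) - 1"] by (simp add: power2_diff)
    then have "norm (h \<omega>) \<le> 1 + (norm (h \<omega>))\<^sup>2" using norm_ge_zero[of "h \<omega>"] by linarith
    then show "norm (h \<omega>) \<le> norm (1 + (norm (h \<omega>))\<^sup>2)" by simp
  qed
qed fact

lemma integrable_norm_diff_square:
  fixes k :: "'a \<Rightarrow> 'b::euclidean_space"
  assumes "prob_space \<Omega>" "k \<in> borel_measurable \<Omega>" "integrable \<Omega> (\<lambda>\<omega>. (norm (k \<omega>))\<^sup>2)"
  shows "integrable \<Omega> (\<lambda>\<omega>. (norm (k \<omega> - c))\<^sup>2)"
  by (rule integrable_square_norm_bound[OF assms(1,3), where a=1 and b="norm c"])
     (use assms(2) in \<open>auto intro: order.trans[OF norm_triangle_ineq4]\<close>)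

lemma integral_norm_centered_square_le:
  fixes k :: "'a \<Rightarrow> 'b::euclidean_space"
  assumes P: "prob_space \<Omega>" and [measurable]: "k \<in> borel_measurable \<Omega>"
    and ki: "integrable \<Omega> (\<lambda>\<omega>. (norm (k \<omega>))\<^sup>2)"
  shows "(\<integral>\<omega>. (norm (k \<omega> - (\<integral>\<omega>. k \<omega> \<partial>\<Omega>)))\<^sup>2 \<partial>\<Omega>) \<le> (\<integral>\<omega>. (norm (k \<omega> - c))\<^sup>2 \<partial>\<Omega>)"
proof -
  interpret prob_space \<Omega> by fact
  define m where "m = (\<integral>\<omega>. k \<omega> \<partial>\<Omega>)"
  have k1: "integrable \<Omega> k" by (rule integrable_of_square_integrable[OF P ki]) simp
  have km: "integrable \<Omega> (\<lambda>\<omega>. k \<omega> - m)" using k1 by simp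
  have cross: "(\<integral>\<omega>. (k \<omega> - m) \<bullet> (m - c) \<partial>\<Omega>) = 0"
    using k1 by (simp add: m_def prob_space)
  have "(\<integral>\<omega>. (norm (k \<omega> - c))\<^sup>2 \<partial>\<Omega>) =
        (\<integral>\<omega>. (norm (k \<omega> - m))\<^sup>2 + (norm (m - c))\<^sup>2 + 2 * ((k \<omega> - m) \<bullet> (m - c)) \<partial>\<Omega>)"
    by (rule Bochner_Integration.integral_cong[OF refl])
       (simp add: power2_norm_eq_inner inner_commute algebra_simps)
  also have "\<dots> = (\<integral>\<omega>. (norm (k \<omega> - m))\<^sup>2 \<partial>\<Omega>) + (norm (m - c))\<^sup>2"
    using integrable_norm_diff_square[OF P _ ki, of m] km cross by (simp add: prob_space)
  finally show ?thesis unfolding m_def[symmetric] by simp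
qed

lemma integral_norm_add_square_le:
  fixes f g :: "'a \<Rightarrow> 'b::euclidean_space"
  assumes [measurable]: "f \<in> borel_measurable \<Omega>" "g \<in> borel_measurable \<Omega>"
    and fi: "integrable \<Omega> (\<lambda>\<omega>. (norm (f \<omega>))\<^sup>2)" and gi: "integrable \<Omega> (\<lambda>\<omega>. (norm (g \<omega>))\<^sup>2)"
  shows "(\<integral>\<omega>. (norm (f \<omega> + g \<omega>))\<^sup>2 \<partial>\<Omega>) \<le>
           (sqrt (\<integral>\<omega>. (norm (f \<omega>))\<^sup>2 \<partial>\<Omega>) + sqrt (\<integral>\<omega>. (norm (g \<omega>))\<^sup>2 \<partial>\<Omega>))\<^sup>2"
proof (rule le_sqrt_add_sqrt_square)
  have si: "integrable \<Omega> (\<lambda>\<omega>. (norm (f \<omega> + g \<omega>))\<^sup>2)"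
    by (rule Bochner_Integration.integrable_bound[where f="\<lambda>\<omega>. 2 * (norm (f \<omega>))\<^sup>2 + 2 * (norm (g \<omega>))\<^sup>2"])
       (use fi gi norm_add_square_le_weighted[of 1] in auto)
  show "0 \<le> (\<integral>\<omega>. (norm (f \<omega>))\<^sup>2 \<partial>\<Omega>)" "0 \<le> (\<integral>\<omega>. (norm (g \<omega>))\<^sup>2 \<partial>\<Omega>)" by auto
  fix l :: real assume l: "l > 0"
  have "(\<integral>\<omega>. (norm (f \<omega> + g \<omega>))\<^sup>2 \<partial>\<Omega>) \<le>
        (\<integral>\<omega>. (1 + l) * (norm (f \<omega>))\<^sup>2 + (1 + 1 / l) * (norm (g \<omega>))\<^sup>2 \<partial>\<Omega>)"
    using si fi gi norm_add_square_le_weighted[OF l] by (intro integral_mono) auto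
  then show "(\<integral>\<omega>. (norm (f \<omega> + g \<omega>))\<^sup>2 \<partial>\<Omega>) \<le>
        (1 + l) * (\<integral>\<omega>. (norm (f \<omega>))\<^sup>2 \<partial>\<Omega>) + (1 + 1 / l) * (\<integral>\<omega>. (norm (g \<omega>))\<^sup>2 \<partial>\<Omega>)"
    using fi gi by simp
qed

lemma le_square_of_le_add_square:
  fixes W c :: real
  assumes "c \<ge> 0" and "\<And>s. s > 0 \<Longrightarrow> W \<le> (c + s)\<^sup>2"
  shows "W \<le> c\<^sup>2"
proof (cases "W \<ge> 0")
  case True
  have "sqrt W \<le> c"
  proof (rule field_le_epsilon)
    fix s :: real assume "s > 0"
    then show "sqrt W \<le> c + s" using assms real_le_lsqrt[of "c + s" W] by simp
  qed
  then show ?thesis using True by (metis sqrt_le_D)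
qed (use zero_le_power2[of c] in linarith)

lemma borel_measurable_matrix_vector_mult[measurable]:
  "(\<lambda>v. (A::real^'n^'m) *v v) \<in> borel_measurable borel"
  by (intro borel_measurable_continuous_onI linear_continuous_on matrix_vector_mul_bounded_linear)

lemma borel_measurable_fst_prod[measurable]:
  "fst \<in> borel_measurable (borel :: ('a::second_countable_topology \<times> 'b::second_countable_topology) measure)"
  by (intro borel_measurable_continuous_onI continuous_on_fst continuous_on_id)

lemma borel_measurable_snd_prod[measurable]:
  "snd \<in> borel_measurable (borel :: ('a::second_countable_topology \<times> 'b::second_countable_topology) measure)"
  by (intro borel_measurable_continuous_onI continuous_on_snd continuous_on_id)

lemma Q2D:
  assumes "P \<in> Q2"
  shows "prob_space P" "sets P = sets borel" "integrable P (\<lambda>x. (norm x)\<^sup>2)"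
  using assms by (auto simp: Q2_def)

lemma distr_in_Q2:
  fixes F :: "'a \<Rightarrow> real^'d"
  assumes "prob_space \<Omega>" "F \<in> borel_measurable \<Omega>" "integrable \<Omega> (\<lambda>\<omega>. (norm (F \<omega>))\<^sup>2)"
  shows "distr \<Omega> borel F \<in> Q2"
  using assms by (auto simp: Q2_def integrable_distr_eq intro!: prob_space.prob_space_distr)

lemma mean_distr:
  fixes F :: "'a \<Rightarrow> real^'d"
  assumes "F \<in> borel_measurable \<Omega>"
  shows "mean (distr \<Omega> borel F) = (\<integral>\<omega>. F \<omega> \<partial>\<Omega>)"
  unfolding mean_def by (rule integral_distr[OF assms]) simp

lemma distr_pair_in_couplings:
  fixes F G :: "'a \<Rightarrow> real^'d"
  assumes "prob_space \<Omega>" and [measurable]: "F \<in> borel_measurable \<Omega>" "G \<in> borel_measurable \<Omega>"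
  shows "distr \<Omega> borel (\<lambda>\<omega>. (F \<omega>, G \<omega>)) \<in> couplings (distr \<Omega> borel F) (distr \<Omega> borel G)"
proof -
  let ?Q = "distr \<Omega> borel (\<lambda>\<omega>. (F \<omega>, G \<omega>))"
  have "distr ?Q borel fst = distr \<Omega> borel (fst \<circ> (\<lambda>\<omega>. (F \<omega>, G \<omega>)))"
    and "distr ?Q borel snd = distr \<Omega> borel (snd \<circ> (\<lambda>\<omega>. (F \<omega>, G \<omega>)))"
    by (rule distr_distr; simp)+
  then show ?thesis
    using assms(1) unfolding couplings_def by (auto simp: o_def intro!: prob_space.prob_space_distr)
qed

lemma W2_le_coupling_cost:
  assumes "Q \<in> couplings P1 P2"
  shows "W2 P1 P2 \<le> sqrt (\<integral>z. (norm (fst z - snd z))\<^sup>2 \<partial>Q)"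
proof -
  have "bdd_below {(\<integral>z. (norm (fst z - snd z))\<^sup>2 \<partial>Q) | Q. Q \<in> couplings P1 P2}"
    by (rule bdd_belowI[where m=0]) auto
  then show ?thesis unfolding W2_def using assms by (auto intro!: cInf_lower)
qed

lemma W2_distr_le:
  fixes F G :: "'a \<Rightarrow> real^'d"
  assumes "prob_space \<Omega>" and [measurable]: "F \<in> borel_measurable \<Omega>" "G \<in> borel_measurable \<Omega>"
  shows "W2 (distr \<Omega> borel F) (distr \<Omega> borel G) \<le> sqrt (\<integral>\<omega>. (norm (F \<omega> - G \<omega>))\<^sup>2 \<partial>\<Omega>)"
  using W2_le_coupling_cost[OF distr_pair_in_couplings[OF assms]]
  by (subst (asm) integral_distr) auto

lemma distr_pair_snd:
  assumes "prob_space M1" "prob_space M2"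
  shows "distr (M1 \<Otimes>\<^sub>M M2) M2 snd = M2"
proof -
  interpret p1: prob_space M1 by fact
  interpret p2: prob_space M2 by fact
  interpret pair_sigma_finite M1 M2 by unfold_locales
  have "distr (M1 \<Otimes>\<^sub>M M2) M2 snd = distr (distr (M2 \<Otimes>\<^sub>M M1) (M1 \<Otimes>\<^sub>M M2) (\<lambda>(x, y). (y, x))) M2 snd"
    by (simp flip: distr_pair_swap)
  also have "\<dots> = distr (M2 \<Otimes>\<^sub>M M1) M2 (snd \<circ> (\<lambda>(x, y). (y, x)))"
    by (rule distr_distr[OF measurable_snd measurable_pair_swap'])
  also have "\<dots> = distr (M2 \<Otimes>\<^sub>M M1) M2 fst"
    by (rule distr_cong) (auto simp: split_beta)
  also have "\<dots> = M2" by (rule p1.distr_pair_fst)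
  finally show ?thesis .
qed

lemma couplings_nonempty:
  assumes "P1 \<in> Q2" "P2 \<in> Q2"
  shows "couplings P1 P2 \<noteq> {}"
proof -
  interpret p1: prob_space P1 using Q2D[OF assms(1)] by simp
  interpret p2: prob_space P2 using Q2D[OF assms(2)] by simp
  let ?\<Omega> = "P1 \<Otimes>\<^sub>M P2"
  have s1: "sets P1 = sets borel" and s2: "sets P2 = sets borel" using Q2D assms by auto
  have m1: "fst \<in> borel_measurable ?\<Omega>" using measurable_fst measurable_cong_sets[OF refl s1] by metis
  have m2: "snd \<in> borel_measurable ?\<Omega>" using measurable_snd measurable_cong_sets[OF refl s2] by metis
  have "distr ?\<Omega> borel fst = distr ?\<Omega> P1 fst" "distr ?\<Omega> borel snd = distr ?\<Omega> P2 snd"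
    by (rule distr_cong; simp add: s1 s2)+
  then have "distr ?\<Omega> borel fst = P1" "distr ?\<Omega> borel snd = P2"
    using p2.distr_pair_fst distr_pair_snd[OF p1.prob_space_axioms p2.prob_space_axioms] by simp_all
  then show ?thesis
    using distr_pair_in_couplings[OF prob_space_pair m1 m2] p1.prob_space_axioms p2.prob_space_axioms
    by (auto simp: prob_space_pair)
qed

lemma exists_coupling_cost_less:
  assumes "P1 \<in> Q2" "P2 \<in> Q2" "W2 P1 P2 \<le> \<rho>" "e > 0"
  shows "\<exists>Q \<in> couplings P1 P2. (\<integral>z. (norm (fst z - snd z))\<^sup>2 \<partial>Q) < \<rho>\<^sup>2 + e"
proof -
  let ?S = "{(\<integral>z. (norm (fst z - snd z))\<^sup>2 \<partial>Q) | Q. Q \<in> couplings P1 P2}"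
  have bdd: "bdd_below ?S" by (rule bdd_belowI[where m=0]) auto
  have "?S \<noteq> {}" using couplings_nonempty[OF assms(1,2)] by auto
  moreover have "Inf ?S < \<rho>\<^sup>2 + e"
    using sqrt_le_D[of "Inf ?S" \<rho>] assms(3,4) unfolding W2_def by simp
  ultimately show ?thesis using cInf_less_iff[OF _ bdd] by auto
qed

definition residual_variance :: "real^'r^'d \<Rightarrow> (real^'d) measure \<Rightarrow> real" where
  "residual_variance X P = (\<integral>\<xi>. (norm (compl_proj X *v (\<xi> - mean P)))\<^sup>2 \<partial>P)"

lemma residual_variance_nonneg: "residual_variance X P \<ge> 0"
  unfolding residual_variance_def by (rule integral_nonneg_AE) simp

lemma integrable_compl_proj_square:
  assumes "X \<in> stiefel" "P \<in> Q2"
  shows "integrable P (\<lambda>x. (norm (compl_proj X *v (x - c)))\<^sup>2)"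
proof -
  have P: "prob_space P" and [measurable_cong]: "sets P = sets borel"
    and Pi: "integrable P (\<lambda>x. (norm x)\<^sup>2)" using Q2D[OF assms(2)] by auto
  have "norm (compl_proj X *v (x - c)) \<le> 1 * norm x + norm c" for x
    using norm_compl_proj_le[OF assms(1), of "x - c"] norm_triangle_ineq4[of x c] by simp
  then show ?thesis by (intro integrable_square_norm_bound[OF P Pi, where a=1 and b="norm c"]) auto
qed

lemma trace_mult_covariance:
  fixes A :: "real^'d^'d"
  assumes "P \<in> Q2"
  shows "trace (A ** covariance P) = (\<integral>x. (A *v (x - mean P)) \<bullet> (x - mean P) \<partial>P)"
proof -
  define m where "m = mean P"
  have P: "prob_space P" and [measurable_cong]: "sets P = sets borel"
    and Pi: "integrable P (\<lambda>x. (norm x)\<^sup>2)" using Q2D[OF assms] by auto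
  have wi: "integrable P (\<lambda>x. (norm (x - m))\<^sup>2)" by (rule integrable_norm_diff_square[OF P _ Pi]) simp
  have pi: "integrable P (\<lambda>x. (x$j - m$j) * (x$i - m$i))" for i j
  proof (rule Bochner_Integration.integrable_bound[OF wi])
    show "AE x in P. norm ((x$j - m$j) * (x$i - m$i)) \<le> norm ((norm (x - m))\<^sup>2)"
    proof (rule AE_I2)
      fix x :: "real^'d"
      have "\<bar>x$j - m$j\<bar> * \<bar>x$i - m$i\<bar> \<le> norm (x - m) * norm (x - m)"
        using component_le_norm_cart[of "x - m" j] component_le_norm_cart[of "x - m" i]
        by (intro mult_mono) auto
      then show "norm ((x$j - m$j) * (x$i - m$i)) \<le> norm ((norm (x - m))\<^sup>2)"
        by (simp add: abs_mult power2_eq_square)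
    qed
  qed measurable
  have "(A *v (x - m)) \<bullet> (x - m) = (\<Sum>i\<in>UNIV. \<Sum>j\<in>UNIV. A$i$j * ((x$j - m$j) * (x$i - m$i)))" for x
    by (simp add: inner_vec_def matrix_vector_mult_def sum_distrib_left sum_distrib_right algebra_simps)
  then have "(\<integral>x. (A *v (x - m)) \<bullet> (x - m) \<partial>P)
        = (\<Sum>i\<in>UNIV. \<Sum>j\<in>UNIV. A$i$j * (\<integral>x. (x$j - m$j) * (x$i - m$i) \<partial>P))"
    using pi by (simp add: Bochner_Integration.integral_sum)
  also have "\<dots> = trace (A ** covariance P)"
    by (simp add: trace_def matrix_matrix_mult_def covariance_def m_def)
  finally show ?thesis unfolding m_def by simp
qed

lemma residual_variance_eq_trace:
  assumes "X \<in> stiefel" "P \<in> Q2"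
  shows "residual_variance X P = trace (compl_proj X ** covariance P)"
  unfolding residual_variance_def trace_mult_covariance[OF assms(2)] norm_compl_proj_square[OF assms(1)] ..

lemma residual_variance_le_shift:
  assumes "X \<in> stiefel" "P \<in> Q2"
  shows "residual_variance X P \<le> (\<integral>x. (norm (compl_proj X *v (x - c)))\<^sup>2 \<partial>P)"
proof -
  let ?M = "compl_proj X"
  have P: "prob_space P" and [measurable_cong]: "sets P = sets borel"
    and Pi: "integrable P (\<lambda>x. (norm x)\<^sup>2)" using Q2D[OF assms(2)] by auto
  have "integrable P (\<lambda>x. x)" by (rule integrable_of_square_integrable[OF P Pi]) simp
  then have "(\<integral>x. ?M *v x \<partial>P) = ?M *v mean P"
    unfolding mean_def by (rule integral_bounded_linear[OF matrix_vector_mul_bounded_linear])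
  then have "residual_variance X P = (\<integral>x. (norm (?M *v x - (\<integral>x. ?M *v x \<partial>P)))\<^sup>2 \<partial>P)"
    by (simp add: residual_variance_def matrix_vector_mult_diff_distrib)
  also have "\<dots> \<le> (\<integral>x. (norm (?M *v x - ?M *v c))\<^sup>2 \<partial>P)"
    by (rule integral_norm_centered_square_le[OF P])
       (use Pi norm_compl_proj_le[OF assms(1)] in
         \<open>auto intro: integrable_square_norm_bound[OF P, where a=1 and b=0]\<close>)
  finally show ?thesis by (simp add: matrix_vector_mult_diff_distrib)
qed

lemma integrable_coupling_norm_square:
  fixes P1 P2 :: "(real^'d) measure"
  assumes "Q \<in> couplings P1 P2" "P1 \<in> Q2" "P2 \<in> Q2"
  shows "integrable Q (\<lambda>z. (norm z)\<^sup>2)"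
proof -
  have [measurable_cong]: "sets Q = sets borel" and d1: "distr Q borel fst = P1"
    and d2: "distr Q borel snd = P2" using assms(1) unfolding couplings_def by auto
  have "integrable Q (\<lambda>z. (norm (fst z))\<^sup>2)" "integrable Q (\<lambda>z. (norm (snd z))\<^sup>2)"
    using Q2D(3)[OF assms(2)] Q2D(3)[OF assms(3)] d1 d2
      integrable_distr_eq[of fst Q borel "\<lambda>x. (norm x)\<^sup>2"]
      integrable_distr_eq[of snd Q borel "\<lambda>x. (norm x)\<^sup>2"] by auto
  then have "integrable Q (\<lambda>z. (norm (fst z))\<^sup>2 + (norm (snd z))\<^sup>2)" by simp
  moreover have "(norm z)\<^sup>2 = (norm (fst z))\<^sup>2 + (norm (snd z))\<^sup>2" for z :: "(real^'d) \<times> (real^'d)"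
    by (cases z) (simp add: norm_Pair)
  ultimately show ?thesis by simp
qed

lemma integral_compl_proj_le_coupling:
  fixes X :: "real^'r^'d" and P P0 :: "(real^'d) measure"
  assumes X: "X \<in> stiefel" and P: "P \<in> Q2" and P0: "P0 \<in> Q2" and Q: "Q \<in> couplings P P0"
  shows "(\<integral>x. (norm (compl_proj X *v (x - mean P0)))\<^sup>2 \<partial>P)
          \<le> (sqrt (\<integral>z. (norm (fst z - snd z))\<^sup>2 \<partial>Q) + sqrt (residual_variance X P0))\<^sup>2"
proof -
  let ?M = "compl_proj X"
  define m0 where "m0 = mean P0"
  define f where "f z = ?M *v (fst z - snd z)" for z :: "(real^'d) \<times> (real^'d)"
  define g where "g z = ?M *v (snd z - m0)" for z :: "(real^'d) \<times> (real^'d)"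
  have Qp: "prob_space Q" and sQ[measurable_cong]: "sets Q = sets borel"
    and d1: "distr Q borel fst = P" and d2: "distr Q borel snd = P0"
    using Q unfolding couplings_def by auto
  have cm: "(\<lambda>z. fst z - snd z) \<in> borel_measurable Q"
    unfolding measurable_cong_sets[OF sQ refl] by measurable
  have fm: "f \<in> borel_measurable Q" and gm: "g \<in> borel_measurable Q"
    unfolding f_def g_def by measurable
  have iz: "integrable Q (\<lambda>z. (norm z)\<^sup>2)" by (rule integrable_coupling_norm_square[OF Q P P0])
  have cost_bound: "norm (fst z - snd z) \<le> 2 * norm z + 0" for z :: "(real^'d) \<times> (real^'d)"
    using norm_triangle_ineq4[of "fst z" "snd z"] norm_fst_le[of "fst z" "snd z"]
      norm_snd_le[of "snd z" "fst z"] by simp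
  have f_bound: "norm (f z) \<le> 2 * norm z + 0" for z
    using norm_compl_proj_le[OF X, of "fst z - snd z"] cost_bound[of z] unfolding f_def by linarith
  have g_bound: "norm (g z) \<le> 1 * norm z + norm m0" for z
    using norm_compl_proj_le[OF X, of "snd z - m0"] norm_triangle_ineq4[of "snd z" m0]
      norm_snd_le[of "snd z" "fst z"] unfolding g_def by simp
  have ci: "integrable Q (\<lambda>z. (norm (fst z - snd z))\<^sup>2)"
    by (rule integrable_square_norm_bound[OF Qp iz cm cost_bound]) simp
  have fi: "integrable Q (\<lambda>z. (norm (f z))\<^sup>2)"
    by (rule integrable_square_norm_bound[OF Qp iz fm f_bound]) simp
  have gi: "integrable Q (\<lambda>z. (norm (g z))\<^sup>2)"
    by (rule integrable_square_norm_bound[OF Qp iz gm g_bound]) simp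
  have "(\<integral>x. (norm (?M *v (x - m0)))\<^sup>2 \<partial>P) = (\<integral>z. (norm (f z + g z))\<^sup>2 \<partial>Q)"
    unfolding d1[symmetric] f_def g_def
    by (subst integral_distr) (auto simp: matrix_vector_mult_diff_distrib)
  also have "\<dots> \<le> (sqrt (\<integral>z. (norm (f z))\<^sup>2 \<partial>Q) + sqrt (\<integral>z. (norm (g z))\<^sup>2 \<partial>Q))\<^sup>2"
    by (rule integral_norm_add_square_le[OF fm gm fi gi])
  also have "\<dots> \<le> (sqrt (\<integral>z. (norm (fst z - snd z))\<^sup>2 \<partial>Q) + sqrt (residual_variance X P0))\<^sup>2"
  proof -
    have "(\<integral>z. (norm (f z))\<^sup>2 \<partial>Q) \<le> (\<integral>z. (norm (fst z - snd z))\<^sup>2 \<partial>Q)"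
      using fi ci by (intro integral_mono) (auto simp: f_def intro: power_mono norm_compl_proj_le[OF X])
    moreover have "(\<integral>z. (norm (g z))\<^sup>2 \<partial>Q) = residual_variance X P0"
      unfolding residual_variance_def d2[symmetric] g_def m0_def by (subst integral_distr) auto
    ultimately show ?thesis
      using residual_variance_nonneg[of X P0] by (intro power_mono add_mono) (auto intro!: add_nonneg_nonneg)
  qed
  finally show ?thesis unfolding m0_def .
qed

lemma residual_variance_le_of_W2:
  assumes X: "X \<in> stiefel" and P: "P \<in> Q2" and P0: "P0 \<in> Q2"
    and W: "W2 P P0 \<le> \<rho>" and "\<rho> \<ge> 0"
  shows "residual_variance X P \<le> (sqrt (residual_variance X P0) + \<rho>)\<^sup>2"
proof -
  have "residual_variance X P \<le> (\<integral>x. (norm (compl_proj X *v (x - mean P0)))\<^sup>2 \<partial>P)"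
    by (rule residual_variance_le_shift[OF X P])
  also have "\<dots> \<le> (sqrt (residual_variance X P0) + \<rho>)\<^sup>2"
  proof (rule le_square_of_le_add_square)
    show "sqrt (residual_variance X P0) + \<rho> \<ge> 0"
      by (intro add_nonneg_nonneg real_sqrt_ge_zero residual_variance_nonneg) fact
    fix s :: real assume "s > 0"
    then obtain Q where Q: "Q \<in> couplings P P0"
      and "(\<integral>z. (norm (fst z - snd z))\<^sup>2 \<partial>Q) < \<rho>\<^sup>2 + s\<^sup>2"
      using exists_coupling_cost_less[OF P P0 W, of "s\<^sup>2"] by auto
    then have "(\<integral>z. (norm (fst z - snd z))\<^sup>2 \<partial>Q) \<le> (\<rho> + s)\<^sup>2"
      using \<open>s > 0\<close> \<open>\<rho> \<ge> 0\<close> unfolding power2_sum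
      by (smt (verit) mult_nonneg_nonneg)
    then have "sqrt (\<integral>z. (norm (fst z - snd z))\<^sup>2 \<partial>Q) \<le> \<rho> + s"
      using \<open>s > 0\<close> \<open>\<rho> \<ge> 0\<close> by (simp add: real_sqrt_le_iff')
    then have "(sqrt (\<integral>z. (norm (fst z - snd z))\<^sup>2 \<partial>Q) + sqrt (residual_variance X P0))\<^sup>2
               \<le> (sqrt (residual_variance X P0) + \<rho> + s)\<^sup>2"
      using residual_variance_nonneg[of X P0] by (intro power_mono) (auto intro!: add_nonneg_nonneg)
    then show "(\<integral>x. (norm (compl_proj X *v (x - mean P0)))\<^sup>2 \<partial>P) \<le> (sqrt (residual_variance X P0) + \<rho> + s)\<^sup>2"
      using integral_compl_proj_le_coupling[OF X P P0 Q] by linarith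
  qed
  finally show ?thesis .
qed

definition stretch :: "real^'r^'d \<Rightarrow> real \<Rightarrow> real^'d \<Rightarrow> real^'d \<Rightarrow> real^'d" where
  "stretch X c m x = x + c *\<^sub>R (compl_proj X *v (x - m))"

lemma borel_measurable_stretch[measurable]: "stretch X c m \<in> borel_measurable borel"
  unfolding stretch_def[abs_def] by measurable

lemma norm_stretch_le:
  assumes "X \<in> stiefel" "c \<ge> 0"
  shows "norm (stretch X c m x) \<le> (1 + c) * norm x + c * norm m"
proof -
  have "norm (stretch X c m x) \<le> norm x + c * norm (compl_proj X *v (x - m))"
    unfolding stretch_def using assms(2) by (metis norm_scaleR abs_of_nonneg norm_triangle_ineq)
  also have "\<dots> \<le> norm x + c * (norm x + norm m)"
    using assms norm_compl_proj_le[OF assms(1), of "x - m"] norm_triangle_ineq4[of x m]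
    by (intro add_left_mono mult_left_mono) auto
  finally show ?thesis by (simp add: algebra_simps)
qed

lemma compl_proj_stretch:
  assumes "X \<in> stiefel"
  shows "compl_proj X *v (stretch X c m x - m) = (1 + c) *\<^sub>R (compl_proj X *v (x - m))"
proof -
  have "stretch X c m x - m = (x - m) + c *\<^sub>R (compl_proj X *v (x - m))" by (simp add: stretch_def)
  then show ?thesis using compl_proj_idem[OF assms, of "x - m"]
    by (simp only: matrix_vector_right_distrib matrix_vector_mult_scaleR scaleR_add_left scaleR_one)
qed

lemma mean_distr_stretch:
  assumes "P \<in> Q2"
  shows "mean (distr P borel (stretch X c (mean P))) = mean P"
proof -
  have P: "prob_space P" and [measurable_cong]: "sets P = sets borel"
    and Pi: "integrable P (\<lambda>x. (norm x)\<^sup>2)" using Q2D[OF assms] by auto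
  interpret prob_space P by fact
  have xi: "integrable P (\<lambda>x. x)" by (rule integrable_of_square_integrable[OF P Pi]) simp
  then have xmi: "integrable P (\<lambda>x. x - mean P)" by simp
  have Mi: "integrable P (\<lambda>x. c *\<^sub>R (compl_proj X *v (x - mean P)))"
    using integrable_bounded_linear[OF matrix_vector_mul_bounded_linear xmi, of "compl_proj X"]
    by (rule integrable_scaleR_right)
  have "(\<integral>x. stretch X c (mean P) x \<partial>P)
        = (\<integral>x. x \<partial>P) + (\<integral>x. c *\<^sub>R (compl_proj X *v (x - mean P)) \<partial>P)"
    unfolding stretch_def by (rule Bochner_Integration.integral_add[OF xi Mi])
  also have "(\<integral>x. c *\<^sub>R (compl_proj X *v (x - mean P)) \<partial>P)
             = c *\<^sub>R (compl_proj X *v (\<integral>x. x - mean P \<partial>P))"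
    by (simp only: integral_scaleR_right integral_bounded_linear[OF matrix_vector_mul_bounded_linear xmi])
  also have "(\<integral>x. x - mean P \<partial>P) = 0" using xi by (simp add: mean_def prob_space)
  finally have "(\<integral>x. stretch X c (mean P) x \<partial>P) = mean P" by (simp add: mean_def)
  then show ?thesis by (subst mean_distr) auto
qed

lemma residual_variance_distr_stretch:
  assumes "X \<in> stiefel" "P \<in> Q2"
  shows "residual_variance X (distr P borel (stretch X c (mean P))) = (1 + c)\<^sup>2 * residual_variance X P"
proof -
  have [measurable_cong]: "sets P = sets borel" using Q2D[OF assms(2)] by auto
  have "residual_variance X (distr P borel (stretch X c (mean P)))
        = (\<integral>x. (norm (compl_proj X *v (stretch X c (mean P) x - mean P)))\<^sup>2 \<partial>P)"
    unfolding residual_variance_def mean_distr_stretch[OF assms(2)] by (subst integral_distr) auto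
  also have "\<dots> = (\<integral>x. (1 + c)\<^sup>2 * (norm (compl_proj X *v (x - mean P)))\<^sup>2 \<partial>P)"
    by (simp add: compl_proj_stretch[OF assms(1)] power_mult_distrib)
  finally show ?thesis by (simp add: residual_variance_def)
qed

lemma residual_variance_attained_pos:
  fixes X :: "real^'r^'d" and P0 :: "(real^'d) measure"
  assumes X: "X \<in> stiefel" and P0: "P0 \<in> Q2" and "\<rho> \<ge> 0" and V: "residual_variance X P0 > 0"
  shows "\<exists>P \<in> Q2. W2 P P0 \<le> \<rho> \<and> residual_variance X P = (sqrt (residual_variance X P0) + \<rho>)\<^sup>2"
proof -
  let ?V = "residual_variance X P0"
  \<comment> \<open>chosen so that the transport cost c^2 V equals \<rho>^2\<close>
  define c where "c = \<rho> / sqrt ?V"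
  have "c \<ge> 0" and cV: "c * sqrt ?V = \<rho>" using \<open>\<rho> \<ge> 0\<close> V by (auto simp: c_def)
  have P0p: "prob_space P0" and sP[measurable_cong]: "sets P0 = sets borel"
    and Pi: "integrable P0 (\<lambda>x. (norm x)\<^sup>2)" using Q2D[OF P0] by auto
  define F where "F = stretch X c (mean P0)"
  have Fm[measurable]: "F \<in> borel_measurable P0" unfolding F_def by simp
  define P where "P = distr P0 borel F"
  have "P \<in> Q2" unfolding P_def
    by (rule distr_in_Q2[OF P0p Fm integrable_square_norm_bound[OF P0p Pi Fm,
          where a="1 + c" and b="c * norm (mean P0)"]])
       (use \<open>c \<ge> 0\<close> norm_stretch_le[OF X \<open>c \<ge> 0\<close>] in \<open>auto simp: F_def\<close>)
  moreover have "W2 P P0 \<le> \<rho>"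
  proof -
    have "W2 P (distr P0 borel (\<lambda>x. x)) \<le> sqrt (\<integral>x. (norm (F x - x))\<^sup>2 \<partial>P0)"
      unfolding P_def by (rule W2_distr_le[OF P0p]) auto
    also have "(\<integral>x. (norm (F x - x))\<^sup>2 \<partial>P0) = (c * sqrt ?V)\<^sup>2"
      using V by (simp add: F_def stretch_def residual_variance_def power_mult_distrib)
    finally show ?thesis using cV \<open>\<rho> \<ge> 0\<close> by (simp add: distr_id2 sP)
  qed
  moreover have "residual_variance X P = (sqrt ?V + \<rho>)\<^sup>2"
  proof -
    have "(sqrt ?V + \<rho>)\<^sup>2 = ((1 + c) * sqrt ?V)\<^sup>2" by (simp add: cV[symmetric] algebra_simps)
    also have "\<dots> = (1 + c)\<^sup>2 * ?V" using V by (simp add: power_mult_distrib)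
    finally show ?thesis using residual_variance_distr_stretch[OF X P0, of c] by (simp add: P_def F_def)
  qed
  ultimately show ?thesis by blast
qed

lemma AE_compl_proj_centered_eq_0:
  assumes "X \<in> stiefel" "P \<in> Q2" "residual_variance X P = 0"
  shows "AE x in P. compl_proj X *v (x - mean P) = 0"
proof -
  have "AE x in P. (norm (compl_proj X *v (x - mean P)))\<^sup>2 = 0"
    using integral_nonneg_eq_0_iff_AE[OF integrable_compl_proj_square[OF assms(1,2)]] assms(3)
    unfolding residual_variance_def by auto
  then show ?thesis by simp
qed

lemma random_sign_pair:
  fixes a :: real
  assumes "prob_space M"
  shows "integrable (M \<Otimes>\<^sub>M measure_pmf (bernoulli_pmf (1/2))) (\<lambda>\<omega>. if snd \<omega> then a else - a)"
    and "(\<integral>\<omega>. (if snd \<omega> then a else - a) \<partial>(M \<Otimes>\<^sub>M measure_pmf (bernoulli_pmf (1/2)))) = 0"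
proof -
  let ?B = "measure_pmf (bernoulli_pmf (1/2))"
  have snm: "snd \<in> measurable (M \<Otimes>\<^sub>M ?B) ?B" by simp
  have sgm: "(\<lambda>b. if b then a else - a) \<in> borel_measurable ?B" by simp
  have dsnd: "distr (M \<Otimes>\<^sub>M ?B) ?B snd = ?B"
    by (rule distr_pair_snd[OF assms prob_space_measure_pmf])
  have "integrable ?B (\<lambda>b. if b then a else - a)"
    by (rule measure_pmf.integrable_const_bound[where B="\<bar>a\<bar>"]) auto
  then show "integrable (M \<Otimes>\<^sub>M ?B) (\<lambda>\<omega>. if snd \<omega> then a else - a)"
    using integrable_distr_eq[OF snm sgm] dsnd by simp
  have "(\<integral>\<omega>. (if snd \<omega> then a else - a) \<partial>(M \<Otimes>\<^sub>M ?B)) = (\<integral>b. (if b then a else - a) \<partial>?B)"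
    by (subst integral_distr[OF snm sgm, symmetric]) (simp add: dsnd)
  also have "\<dots> = 0" by simp
  finally show "(\<integral>\<omega>. (if snd \<omega> then a else - a) \<partial>(M \<Otimes>\<^sub>M ?B)) = 0" .
qed

lemma fst_pair_measure_borel:
  assumes "sets P = sets borel" "prob_space M"
  shows "fst \<in> borel_measurable (P \<Otimes>\<^sub>M M)" and "distr (P \<Otimes>\<^sub>M M) borel fst = P"
proof -
  show "fst \<in> borel_measurable (P \<Otimes>\<^sub>M M)"
    using measurable_fst measurable_cong_sets[OF refl assms(1)] by metis
  have "distr (P \<Otimes>\<^sub>M M) borel fst = distr (P \<Otimes>\<^sub>M M) P fst"
    by (rule distr_cong) (simp_all add: assms(1))
  then show "distr (P \<Otimes>\<^sub>M M) borel fst = P" using prob_space.distr_pair_fst[OF assms(2)] by simp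
qed

lemma random_sign_shift:
  fixes P0 :: "(real^'d) measure" and u :: "real^'d"
  assumes P0: "P0 \<in> Q2" and u: "norm u = 1" and "\<rho> \<ge> 0"
  defines "\<Omega> \<equiv> P0 \<Otimes>\<^sub>M measure_pmf (bernoulli_pmf (1/2))"
    and "F \<equiv> \<lambda>\<omega>. fst \<omega> + (if snd \<omega> then \<rho> else - \<rho>) *\<^sub>R u"
  shows "distr \<Omega> borel F \<in> Q2" and "W2 (distr \<Omega> borel F) P0 \<le> \<rho>"
    and "mean (distr \<Omega> borel F) = mean P0"
proof -
  have P0p: "prob_space P0" and sP: "sets P0 = sets borel"
    and Pi: "integrable P0 (\<lambda>x. (norm x)\<^sup>2)" using Q2D[OF P0] by auto
  have \<Omega>p: "prob_space \<Omega>" unfolding \<Omega>_def by (rule prob_space_pair[OF P0p prob_space_measure_pmf])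
  have fm[measurable]: "fst \<in> borel_measurable \<Omega>" and dfst: "distr \<Omega> borel fst = P0"
    unfolding \<Omega>_def by (rule fst_pair_measure_borel[OF sP prob_space_measure_pmf])+
  have "(\<lambda>\<omega>. (if snd \<omega> then \<rho> else - \<rho>) *\<^sub>R u) \<in> borel_measurable \<Omega>"
    unfolding \<Omega>_def by (rule measurable_compose[OF measurable_snd]) simp
  then have Fm[measurable]: "F \<in> borel_measurable \<Omega>" unfolding F_def by (intro borel_measurable_add fm)
  have shift: "norm (F \<omega> - fst \<omega>) = \<rho>" for \<omega> using u \<open>\<rho> \<ge> 0\<close> by (simp add: F_def)
  have fi: "integrable \<Omega> (\<lambda>\<omega>. (norm (fst \<omega>))\<^sup>2)"
    using Pi dfst integrable_distr_eq[OF fm, of "\<lambda>x. (norm x)\<^sup>2"] by simp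
  show "distr \<Omega> borel F \<in> Q2"
  proof (rule distr_in_Q2[OF \<Omega>p Fm integrable_square_norm_bound[OF \<Omega>p fi Fm, where a=1 and b=\<rho>]])
    show "norm (F \<omega>) \<le> 1 * norm (fst \<omega>) + \<rho>" for \<omega>
      using norm_triangle_ineq[of "fst \<omega>" "F \<omega> - fst \<omega>"] shift[of \<omega>] by simp
  qed simp
  have "W2 (distr \<Omega> borel F) P0 \<le> sqrt (\<integral>\<omega>. (norm (F \<omega> - fst \<omega>))\<^sup>2 \<partial>\<Omega>)"
    using W2_distr_le[OF \<Omega>p Fm fm] unfolding dfst .
  then show "W2 (distr \<Omega> borel F) P0 \<le> \<rho>"
    using prob_space.prob_space[OF \<Omega>p] \<open>\<rho> \<ge> 0\<close> by (simp add: shift)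
  have "(\<integral>\<omega>. fst \<omega> \<partial>\<Omega>) = mean P0"
    using integral_distr[OF fm, of "\<lambda>x. x"] unfolding dfst mean_def by simp
  \<comment> \<open>the fair random sign keeps the mean in place\<close>
  then show "mean (distr \<Omega> borel F) = mean P0"
    using integrable_of_square_integrable[OF \<Omega>p fi fm] random_sign_pair[OF P0p, of \<rho>]
    unfolding \<Omega>_def by (subst mean_distr[OF Fm[unfolded \<Omega>_def]]) (simp add: F_def)
qed

lemma residual_variance_attained_zero:
  fixes X :: "real^'r^'d" and P0 :: "(real^'d) measure"
  assumes X: "X \<in> stiefel" and card: "CARD('r) < CARD('d)" and P0: "P0 \<in> Q2"
    and "\<rho> \<ge> 0" and V: "residual_variance X P0 = 0"
  shows "\<exists>P \<in> Q2. W2 P P0 \<le> \<rho> \<and> residual_variance X P = (sqrt (residual_variance X P0) + \<rho>)\<^sup>2"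
proof -
  let ?M = "compl_proj X"
  obtain u where u: "norm u = 1" "?M *v u = u" using compl_proj_fixes_unit_vector[OF X card] by blast
  define \<Omega> where "\<Omega> = P0 \<Otimes>\<^sub>M measure_pmf (bernoulli_pmf (1/2))"
  define F where "F \<omega> = fst \<omega> + (if snd \<omega> then \<rho> else - \<rho>) *\<^sub>R u" for \<omega> :: "(real^'d) \<times> bool"
  define P where "P = distr \<Omega> borel F"
  have shift: "P \<in> Q2" "W2 P P0 \<le> \<rho>" "mean P = mean P0"
    using random_sign_shift[OF P0 u(1) \<open>\<rho> \<ge> 0\<close>] unfolding P_def \<Omega>_def F_def[abs_def] by auto
  have \<Omega>p: "prob_space \<Omega>"
    unfolding \<Omega>_def by (rule prob_space_pair[OF Q2D(1)[OF P0] prob_space_measure_pmf])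
  have fm[measurable]: "fst \<in> borel_measurable \<Omega>" and dfst: "distr \<Omega> borel fst = P0"
    unfolding \<Omega>_def by (rule fst_pair_measure_borel[OF Q2D(2)[OF P0] prob_space_measure_pmf])+
  have "(\<lambda>\<omega>. (if snd \<omega> then \<rho> else - \<rho>) *\<^sub>R u) \<in> borel_measurable \<Omega>"
    unfolding \<Omega>_def by (rule measurable_compose[OF measurable_snd]) simp
  then have Fm[measurable]: "F \<in> borel_measurable \<Omega>"
    unfolding F_def[abs_def] by (intro borel_measurable_add fm)
  have "AE x in distr \<Omega> borel fst. ?M *v (x - mean P0) = 0"
    using AE_compl_proj_centered_eq_0[OF X P0 V] unfolding dfst .
  then have "AE \<omega> in \<Omega>. ?M *v (fst \<omega> - mean P0) = 0" by (subst (asm) AE_distr_iff[OF fm]) auto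
  then have "AE \<omega> in \<Omega>. (norm (?M *v (F \<omega> - mean P0)))\<^sup>2 = \<rho>\<^sup>2"
  proof eventually_elim
    case (elim \<omega>)
    have "?M *v (F \<omega> - mean P0)
          = ?M *v (fst \<omega> - mean P0) + (if snd \<omega> then \<rho> else - \<rho>) *\<^sub>R (?M *v u)"
      by (simp add: F_def algebra_simps)
    then show ?case using elim u by simp
  qed
  then have "(\<integral>\<omega>. (norm (?M *v (F \<omega> - mean P0)))\<^sup>2 \<partial>\<Omega>) = \<rho>\<^sup>2"
    using prob_space.prob_space[OF \<Omega>p] by (subst integral_cong_AE[where g="\<lambda>_. \<rho>\<^sup>2"]) auto
  then have "residual_variance X P = \<rho>\<^sup>2"
    unfolding residual_variance_def P_def shift(3)[unfolded P_def] by (subst integral_distr) auto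
  then show ?thesis using shift V by auto
qed

lemma phi_closed_form:
  fixes X :: "real^'r^'d" and P0 :: "(real^'d) measure"
  assumes X: "X \<in> stiefel" and card: "CARD('r) < CARD('d)" and P0: "P0 \<in> Q2" and "\<rho> \<ge> 0"
  shows "phi \<rho> P0 X = (sqrt (residual_variance X P0) + \<rho>)\<^sup>2"
proof -
  obtain P' where P': "P' \<in> Q2" "W2 P' P0 \<le> \<rho>" "residual_variance X P' = (sqrt (residual_variance X P0) + \<rho>)\<^sup>2"
  proof (cases "residual_variance X P0 > 0")
    case True
    then show ?thesis using residual_variance_attained_pos[OF X P0 \<open>\<rho> \<ge> 0\<close>] that by blast
  next
    case False
    then have "residual_variance X P0 = 0" using residual_variance_nonneg[of X P0] by simp
    then show ?thesis using residual_variance_attained_zero[OF X card P0 \<open>\<rho> \<ge> 0\<close>] that by blast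
  qed
  have "Sup {residual_variance X P | P. P \<in> Q2 \<and> W2 P P0 \<le> \<rho>} = (sqrt (residual_variance X P0) + \<rho>)\<^sup>2"
  proof (rule cSup_eq_maximum)
    show "(sqrt (residual_variance X P0) + \<rho>)\<^sup>2 \<in> {residual_variance X P | P. P \<in> Q2 \<and> W2 P P0 \<le> \<rho>}"
      using P' by (auto intro!: exI[of _ P'])
  qed (auto intro: residual_variance_le_of_W2[OF X _ P0 _ \<open>\<rho> \<ge> 0\<close>])
  then show ?thesis unfolding phi_def compl_proj_def[symmetric] residual_variance_def[symmetric] .
qed

theorem mainTheorem6:
  fixes \<rho> :: real and P0 :: "(real^'d) measure"
  assumes "CARD('r) < CARD('d)"
    and "\<rho> \<ge> 0"
    and "P0 \<in> Q2"
  shows "{X \<in> (stiefel :: (real^'r^'d) set). \<forall>Y \<in> (stiefel :: (real^'r^'d) set). phi \<rho> P0 X \<le> phi \<rho> P0 Y}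
       = {X \<in> (stiefel :: (real^'r^'d) set). \<forall>Y \<in> (stiefel :: (real^'r^'d) set).
            trace ((mat 1 - X ** transpose X) ** covariance P0)
              \<le> trace ((mat 1 - Y ** transpose Y) ** covariance P0)}"
proof -
  have "phi \<rho> P0 X \<le> phi \<rho> P0 Y \<longleftrightarrow>
        trace (compl_proj X ** covariance P0) \<le> trace (compl_proj Y ** covariance P0)"
    if "X \<in> (stiefel :: (real^'r^'d) set)" "Y \<in> (stiefel :: (real^'r^'d) set)" for X Y
  proof -
    have "phi \<rho> P0 X \<le> phi \<rho> P0 Y \<longleftrightarrow>
          sqrt (residual_variance X P0) + \<rho> \<le> sqrt (residual_variance Y P0) + \<rho>"
      unfolding phi_closed_form[OF that(1) assms(1,3,2)] phi_closed_form[OF that(2) assms(1,3,2)]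
      using assms(2) by (intro power_mono_iff) (auto intro!: add_nonneg_nonneg residual_variance_nonneg)
    then show ?thesis by (simp add: residual_variance_eq_trace[OF _ assms(3)] that)
  qed
  then show ?thesis unfolding compl_proj_def[symmetric] by blast
qed

end
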